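(* Let $X$ be a super $X$-set parameter, let $G$ and $G'$ be graphs of the same order $n$, and let $\varphi:\mathfrak{X}(G)\to\mathfrak{X}(G')$ be a graph isomorphism. Then $|\varphi(S)|=|S|$ for every $X$-set $S$ of $G$ if and only if there exists a bijection $\psi:V(G)\to V(G')$ such that $\psi(S)=\varphi(S)$ for every $X$-set $S$ of $G$ (where $\psi(S)=\{\psi(s):s\in S\}$). In particular, if $|\varphi(S)|=|S|$ for every $X$-set $S$ of $G$, then the vertices of $G'$ can be relabeled so that $G$ and the relabeled graph have exactly the same $X$-sets.
   Context: All graphs are finite, simple, undirected, with nonempty vertex set. A super $X$-set parameter $X$ assigns to each graph $G$ a family of subsets of $V(G)$, called the $X$-sets of $G$, such that: every graph isomorphism maps $X$-sets to $X$-sets; every graph has at least one $X$-set; and (Superset) if $S$ is an $X$-set of $G$ and $S\subseteq S'\subseteq V(G)$, then $S'$ is an $X$-set of $G$. The $X$-TAR graph $\mathfrak{X}(G)$ has as vertices the $X$-sets of $G$, with $S_1S_2$ an edge iff $|S_1\ominus S_2|=1$. *)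

theory Defs
  imports Main
begin

type_synonym 'v graph = "'v set \<times> 'v set set"

definition verts :: "'v graph \<Rightarrow> 'v set" where
  "verts G = fst G"

definition edges :: "'v graph \<Rightarrow> 'v set set" where
  "edges G = snd G"

definition is_graph :: "'v graph \<Rightarrow> bool" where
  "is_graph G \<longleftrightarrow> finite (verts G) \<and> verts G \<noteq> {} \<and>
     (\<forall>e\<in>edges G. e \<subseteq> verts G \<and> card e = 2)"

definition graph_iso :: "('v \<Rightarrow> 'w) \<Rightarrow> 'v graph \<Rightarrow> 'w graph \<Rightarrow> bool" where
  "graph_iso f G H \<longleftrightarrow> bij_betw f (verts G) (verts H) \<and>
     (\<forall>u\<in>verts G. \<forall>v\<in>verts G. {u, v} \<in> edges G \<longleftrightarrow> {f u, f v} \<in> edges H)"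

definition super_param :: "('v graph \<Rightarrow> 'v set set) \<Rightarrow> bool" where
  "super_param X \<longleftrightarrow>
     (\<forall>G. is_graph G \<longrightarrow> X G \<subseteq> Pow (verts G)) \<and>
     (\<forall>G H f. is_graph G \<longrightarrow> is_graph H \<longrightarrow> graph_iso f G H \<longrightarrow>
         (\<forall>S\<in>X G. f ` S \<in> X H)) \<and>
     (\<forall>G. is_graph G \<longrightarrow> X G \<noteq> {}) \<and>
     (\<forall>G S S'. is_graph G \<longrightarrow> S \<in> X G \<longrightarrow> S \<subseteq> S' \<longrightarrow> S' \<subseteq> verts G \<longrightarrow> S' \<in> X G)"

definition tar :: "('v graph \<Rightarrow> 'v set set) \<Rightarrow> 'v graph \<Rightarrow> 'v set graph" where
  "tar X G = (X G, {{S1, S2} | S1 S2. S1 \<in> X G \<and> S2 \<in> X G \<and>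
                                       card ((S1 - S2) \<union> (S2 - S1)) = 1})"

definition relabel :: "('v \<Rightarrow> 'w) \<Rightarrow> 'v graph \<Rightarrow> 'w graph" where
  "relabel f G = (f ` verts G, (\<lambda>e. f ` e) ` edges G)"

end

theory Submission
  imports Defs
begin

text \<open>Let \<open>V\<close>, \<open>V'\<close> be the vertex sets and suppose \<open>\<phi>\<close> preserves cardinalities. An edge
  of the TAR graph between \<open>T\<close> and \<open>T \<union> {x}\<close> is then mapped to an edge between sets whose
  sizes differ by one, so \<open>\<phi>\<close> is monotone along single insertions and hence monotone.
  The X-sets of size \<open>|V| - 1\<close> are the co-singletons \<open>V - {v}\<close>; \<open>\<phi>\<close> permutes them, which
  defines a bijection \<open>v \<mapsto> h v\<close> with \<open>\<phi> (V - {v}) = V' - {h v}\<close> on the vertices \<open>v\<close> for which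
  \<open>V - {v}\<close> is an X-set. Extend \<open>h\<close> arbitrarily to a bijection \<open>\<psi> : V \<rightarrow> V'\<close>. For an X-set
  \<open>S\<close> and \<open>v \<notin> S\<close>, the superset property gives \<open>S \<subseteq> V - {v}\<close> with \<open>V - {v}\<close> an X-set, so by
  monotonicity \<open>\<psi> v \<notin> \<phi> S\<close>; thus \<open>\<phi> S \<subseteq> \<psi> ` S\<close>, and equality follows by counting.
  Relabelling \<open>G'\<close> along \<open>\<psi>\<^sup>-\<^sup>1\<close> then transports the X-sets of \<open>G'\<close> onto those of \<open>G\<close>.\<close>

lemma super_param_subset_verts: "super_param X \<Longrightarrow> is_graph G \<Longrightarrow> S \<in> X G \<Longrightarrow> S \<subseteq> verts G"
  unfolding super_param_def by (metis PowD subsetD)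

lemma super_param_image_iso:
  "super_param X \<Longrightarrow> is_graph G \<Longrightarrow> is_graph H \<Longrightarrow> graph_iso f G H \<Longrightarrow> S \<in> X G \<Longrightarrow> f ` S \<in> X H"
  unfolding super_param_def by metis

lemma super_param_nonempty: "super_param X \<Longrightarrow> is_graph G \<Longrightarrow> X G \<noteq> {}"
  unfolding super_param_def by metis

lemma super_param_superset:
  "super_param X \<Longrightarrow> is_graph G \<Longrightarrow> S \<in> X G \<Longrightarrow> S \<subseteq> S' \<Longrightarrow> S' \<subseteq> verts G \<Longrightarrow> S' \<in> X G"
  unfolding super_param_def by metis

lemma super_param_verts:
  assumes X: "super_param X" and G: "is_graph G"
  shows "verts G \<in> X G"
proof -
  obtain S where "S \<in> X G" using super_param_nonempty[OF X G] by blast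
  then show ?thesis using super_param_superset[OF X G] super_param_subset_verts[OF X G] by blast
qed

lemma finite_verts: "is_graph G \<Longrightarrow> finite (verts G)"
  unfolding is_graph_def by blast

lemma verts_tar [simp]: "verts (tar X G) = X G"
  by (simp add: tar_def verts_def)

lemma edges_tar_iff:
  "{A, B} \<in> edges (tar X G) \<longleftrightarrow> A \<in> X G \<and> B \<in> X G \<and> card (sym_diff A B) = 1"
proof
  assume "{A, B} \<in> edges (tar X G)"
  then obtain S1 S2 where "{A, B} = {S1, S2}" "S1 \<in> X G" "S2 \<in> X G"
      and "card ((S1 - S2) \<union> (S2 - S1)) = 1"
    by (auto simp: tar_def edges_def)
  then show "A \<in> X G \<and> B \<in> X G \<and> card (sym_diff A B) = 1"
    by (auto simp: doubleton_eq_iff Un_commute)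
qed (auto simp: tar_def edges_def)

lemma subset_if_card_sym_diff_eq_1:
  assumes "finite A" "finite B" "card (sym_diff A B) = 1" "card B = card A + 1"
  shows "A \<subseteq> B"
proof -
  have "card (sym_diff A B) = card (A - B) + card (B - A)"
    using assms(1,2) by (intro card_Un_disjoint) auto
  moreover have "card A = card (A \<inter> B) + card (A - B)" "card B = card (A \<inter> B) + card (B - A)"
    using assms(1,2) by (metis Int_Diff_disjoint Int_Diff_Un card_Un_disjoint finite_Diff finite_Int
        Int_commute)+
  ultimately have "card (A - B) = 0" using assms(3,4) by linarith
  then show ?thesis using assms(1) by auto
qed

lemma is_graph_relabel:
  assumes "is_graph G" "inj_on f (verts G)"
  shows "is_graph (relabel f G)"
  unfolding is_graph_def
proof (intro conjI ballI)
  show "finite (verts (relabel f G))" "verts (relabel f G) \<noteq> {}"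
    using assms(1) unfolding is_graph_def relabel_def verts_def by simp_all
next
  fix e assume "e \<in> edges (relabel f G)"
  then obtain e0 where e0: "e0 \<in> edges G" "e = f ` e0" by (auto simp: relabel_def edges_def)
  with assms(1) have "e0 \<subseteq> verts G" "card e0 = 2" unfolding is_graph_def by auto
  with assms(2) e0(2) show "e \<subseteq> verts (relabel f G)" "card e = 2"
    by (auto simp: relabel_def verts_def card_image inj_on_subset)
qed

lemma graph_iso_relabel:
  assumes "is_graph G" "inj_on f (verts G)"
  shows "graph_iso f G (relabel f G)"
  unfolding graph_iso_def
proof (intro conjI ballI)
  show "bij_betw f (verts G) (verts (relabel f G))"
    using assms(2) by (simp add: bij_betw_def relabel_def verts_def)
next
  fix u v assume uv: "u \<in> verts G" "v \<in> verts G"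
  have "{u, v} = e" if "e \<in> edges G" "f ` {u, v} = f ` e" for e
  proof -
    have "e \<subseteq> verts G" "{u, v} \<subseteq> verts G" using that(1) uv assms(1) unfolding is_graph_def by auto
    with that(2) show ?thesis using inj_on_image_eq_iff[OF assms(2)] by metis
  qed
  then show "{u, v} \<in> edges G \<longleftrightarrow> {f u, f v} \<in> edges (relabel f G)"
    by (auto simp: relabel_def edges_def)
qed

lemma graph_iso_inv_into:
  assumes "graph_iso f G H"
  shows "graph_iso (inv_into (verts G) f) H G"
  unfolding graph_iso_def
proof (intro conjI ballI)
  have bij: "bij_betw f (verts G) (verts H)" using assms unfolding graph_iso_def by blast
  then show "bij_betw (inv_into (verts G) f) (verts H) (verts G)" by (rule bij_betw_inv_into)
  fix u v assume uv: "u \<in> verts H" "v \<in> verts H"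
  let ?g = "inv_into (verts G) f"
  have "?g u \<in> verts G" "?g v \<in> verts G" "f (?g u) = u" "f (?g v) = v"
    using uv bij by (auto intro: bij_betw_apply[OF bij_betw_inv_into] bij_betw_inv_into_right)
  then show "{u, v} \<in> edges H \<longleftrightarrow> {?g u, ?g v} \<in> edges G"
    using assms unfolding graph_iso_def by metis
qed

lemma super_param_relabel:
  assumes "super_param X" "is_graph G" "inj_on f (verts G)"
  shows "X (relabel f G) = image f ` X G"
proof
  have graph: "is_graph (relabel f G)" and iso: "graph_iso f G (relabel f G)"
    using assms(2,3) by (rule is_graph_relabel, rule graph_iso_relabel)
  then show "image f ` X G \<subseteq> X (relabel f G)"
    using super_param_image_iso[OF assms(1,2)] by blast
  show "X (relabel f G) \<subseteq> image f ` X G"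
  proof
    fix T assume T: "T \<in> X (relabel f G)"
    then have "T \<subseteq> f ` verts G"
      using super_param_subset_verts[OF assms(1) graph] by (simp add: relabel_def verts_def)
    then have "T = f ` inv_into (verts G) f ` T" by (simp add: image_inv_into_cancel)
    moreover have "inv_into (verts G) f ` T \<in> X G"
      using super_param_image_iso[OF assms(1) graph assms(2) graph_iso_inv_into[OF iso] T] .
    ultimately show "T \<in> image f ` X G" by blast
  qed
qed

lemma bij_betw_Collect:
  assumes "bij_betw f A B" "\<And>x. x \<in> A \<Longrightarrow> P (f x) \<longleftrightarrow> Q x"
  shows "bij_betw f {x \<in> A. Q x} {y \<in> B. P y}"
  using assms by (intro bij_betw_subset[OF assms(1)]) (auto simp: bij_betw_def)

lemma bij_betw_remove_singleton:
  assumes "finite V"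
  shows "bij_betw (\<lambda>v. V - {v}) {v \<in> V. P (V - {v})} {S. S \<subseteq> V \<and> card S + 1 = card V \<and> P S}"
  unfolding bij_betw_def
proof
  show "inj_on (\<lambda>v. V - {v}) {v \<in> V. P (V - {v})}"
    by (rule inj_onI) blast
  have "S \<in> (\<lambda>v. V - {v}) ` {v \<in> V. P (V - {v})}"
    if "S \<subseteq> V" "card S + 1 = card V" "P S" for S
  proof -
    have "card (V - S) = 1" using that assms by (simp add: card_Diff_subset finite_subset)
    then obtain v where "V - S = {v}" by (rule card_1_singletonE)
    then have "S = V - {v}" "v \<in> V" using that(1) by auto
    with that(3) show ?thesis by blast
  qed
  moreover have "card (V - {v}) + 1 = card V" if "v \<in> V" for v
    using assms that by (metis card_Suc_Diff1 Suc_eq_plus1)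
  ultimately show "(\<lambda>v. V - {v}) ` {v \<in> V. P (V - {v})} = {S. S \<subseteq> V \<and> card S + 1 = card V \<and> P S}"
    by auto
qed

lemma bij_betw_extend:
  assumes "finite V" "finite V'" "card V = card V'" "D \<subseteq> V" "D' \<subseteq> V'" "bij_betw h D D'"
  obtains \<psi> where "bij_betw \<psi> V V'" "\<And>x. x \<in> D \<Longrightarrow> \<psi> x = h x"
proof -
  have "card (V - D) = card (V' - D')"
    using assms by (simp add: card_Diff_subset finite_subset bij_betw_same_card)
  then obtain k where k: "bij_betw k (V - D) (V' - D')"
    using assms(1,2) by (meson finite_Diff finite_same_card_bij)
  define \<psi> where "\<psi> x = (if x \<in> D then h x else k x)" for x
  have "bij_betw \<psi> (D \<union> (V - D)) (D' \<union> (V' - D'))"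
  proof (rule bij_betw_combine)
    show "bij_betw \<psi> D D'" using assms(6) by (rule bij_betw_cong[THEN iffD1, rotated]) (simp add: \<psi>_def)
    show "bij_betw \<psi> (V - D) (V' - D')" using k by (rule bij_betw_cong[THEN iffD1, rotated]) (simp add: \<psi>_def)
  qed blast
  with assms(4,5) have "bij_betw \<psi> V V'"
    by (simp add: Un_absorb1)
  then show thesis by (rule that) (simp add: \<psi>_def)
qed

definition co_singleton_verts :: "('v graph \<Rightarrow> 'v set set) \<Rightarrow> 'v graph \<Rightarrow> 'v set" where
  "co_singleton_verts X G = {v \<in> verts G. verts G - {v} \<in> X G}"

lemma bij_betw_co_singleton_verts:
  assumes "super_param X" "is_graph G"
  shows "bij_betw (\<lambda>v. verts G - {v}) (co_singleton_verts X G) {S \<in> X G. card S + 1 = card (verts G)}"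
proof -
  have "{S. S \<subseteq> verts G \<and> card S + 1 = card (verts G) \<and> S \<in> X G} = {S \<in> X G. card S + 1 = card (verts G)}"
    using super_param_subset_verts[OF assms] by blast
  then show ?thesis
    using bij_betw_remove_singleton[OF finite_verts[OF assms(2)], of "\<lambda>S. S \<in> X G"]
    by (simp add: co_singleton_verts_def)
qed

subsection \<open>Isomorphisms of TAR graphs\<close>

locale tar_iso =
  fixes X :: "'v graph \<Rightarrow> 'v set set" and G G' :: "'v graph" and \<phi> :: "'v set \<Rightarrow> 'v set"
  assumes super_param: "super_param X" and graph: "is_graph G" and graph': "is_graph G'"
    and iso: "graph_iso \<phi> (tar X G) (tar X G')"
begin

lemma bij_X: "bij_betw \<phi> (X G) (X G')"
  using iso by (simp add: graph_iso_def)

lemma card_sym_diff_image: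
  assumes "S \<in> X G" "T \<in> X G" "card (sym_diff S T) = 1"
  shows "card (sym_diff (\<phi> S) (\<phi> T)) = 1"
  using assms iso edges_tar_iff[of S T X G] edges_tar_iff[of "\<phi> S" "\<phi> T" X G']
  unfolding graph_iso_def verts_tar by blast

lemma card_preserving_if_bij_image_eq:
  assumes "bij_betw \<psi> (verts G) (verts G')" "\<forall>S\<in>X G. \<psi> ` S = \<phi> S"
  shows "\<forall>S\<in>X G. card (\<phi> S) = card S"
proof
  fix S assume S: "S \<in> X G"
  have "inj_on \<psi> S"
    using bij_betw_imp_inj_on[OF assms(1)] super_param_subset_verts[OF super_param graph S]
    by (rule inj_on_subset)
  then have "card (\<psi> ` S) = card S" by (rule card_image)
  with S assms(2) show "card (\<phi> S) = card S" by simp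
qed

lemma verts_relabel_inv_into:
  assumes "bij_betw \<psi> (verts G) (verts G')"
  shows "verts (relabel (inv_into (verts G) \<psi>) G') = verts G"
  using bij_betw_imp_surj_on[OF bij_betw_inv_into[OF assms]] by (simp add: relabel_def verts_def)

lemma X_relabel_inv_into:
  assumes "bij_betw \<psi> (verts G) (verts G')" "\<And>S. S \<in> X G \<Longrightarrow> \<psi> ` S = \<phi> S"
  shows "X (relabel (inv_into (verts G) \<psi>) G') = X G"
proof -
  let ?g = "inv_into (verts G) \<psi>"
  have "inj_on ?g (verts G')"
    using assms(1) bij_betw_imp_inj_on bij_betw_inv_into by blast
  then have "X (relabel ?g G') = image ?g ` \<phi> ` X G"
    using super_param_relabel[OF super_param graph'] bij_betw_imp_surj_on[OF bij_X] by simp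
  also have "\<dots> = (\<lambda>S. ?g ` \<psi> ` S) ` X G"
    using assms(2) by (simp add: image_comp)
  also have "\<dots> = X G"
    using bij_betw_imp_inj_on[OF assms(1)] super_param_subset_verts[OF super_param graph]
    by (simp cong: image_cong)
  finally show ?thesis .
qed

end

locale card_preserving_tar_iso = tar_iso +
  assumes card_eq: "S \<in> X G \<Longrightarrow> card (\<phi> S) = card S"
begin

lemma phi_mono_insert:
  assumes "S \<in> X G" "x \<in> verts G"
  shows "\<phi> S \<subseteq> \<phi> (insert x S)"
proof (cases "x \<in> S")
  case False
  have S_verts: "S \<subseteq> verts G" using super_param_subset_verts[OF super_param graph assms(1)] .
  then have S_finite: "finite S" using finite_verts[OF graph] finite_subset by blast
  have xS: "insert x S \<in> X G"
    using super_param_superset[OF super_param graph assms(1)] assms(2) S_verts by blast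
  have "sym_diff S (insert x S) = {x}" using False by auto
  then have "card (sym_diff S (insert x S)) = 1" by simp
  then have "card (sym_diff (\<phi> S) (\<phi> (insert x S))) = 1"
    using card_sym_diff_image assms(1) xS by blast
  moreover have "finite (\<phi> S)" "finite (\<phi> (insert x S))"
    using assms(1) xS bij_betwE[OF bij_X] super_param_subset_verts[OF super_param graph']
      finite_verts[OF graph'] finite_subset by metis+
  moreover have "card (\<phi> (insert x S)) = card (\<phi> S) + 1"
    using card_eq assms(1) xS False S_finite by simp
  ultimately show ?thesis by (metis subset_if_card_sym_diff_eq_1)
qed (simp add: insert_absorb)

lemma phi_mono:
  assumes "S \<in> X G" "S \<subseteq> T" "T \<subseteq> verts G"
  shows "\<phi> S \<subseteq> \<phi> T"
proof -
  have S_verts: "S \<subseteq> verts G" using assms(2,3) by (rule order_trans)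
  have "\<phi> S \<subseteq> \<phi> (S \<union> F)" if "finite F" "F \<subseteq> verts G" for F
    using that
  proof (induction F rule: finite_induct)
    case (insert x F)
    have "S \<union> F \<in> X G"
      using insert.prems S_verts by (intro super_param_superset[OF super_param graph assms(1)]) auto
    then have "\<phi> (S \<union> F) \<subseteq> \<phi> (insert x (S \<union> F))"
      using insert.prems by (intro phi_mono_insert) auto
    with insert show ?case by simp
  qed simp
  moreover have "finite (T - S)" using finite_verts[OF graph] assms(3) finite_subset by blast
  moreover have "S \<union> (T - S) = T" using assms(2) by blast
  ultimately show ?thesis using assms(3) by force
qed

lemma image_verts: "\<phi> (verts G) = verts G'"
proof -
  let ?V = "verts G" and ?V' = "verts G'"
  have "\<phi> ?V \<in> X G'"
    using bij_betw_apply[OF bij_X super_param_verts[OF super_param graph]] .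
  then have "\<phi> ?V \<subseteq> ?V'" by (rule super_param_subset_verts[OF super_param graph'])
  have "?V' \<in> \<phi> ` X G"
    using super_param_verts[OF super_param graph'] bij_betw_imp_surj_on[OF bij_X] by simp
  then obtain S where S: "S \<in> X G" "\<phi> S = ?V'" by (elim imageE) simp
  then have "card ?V' = card S" using card_eq[OF S(1)] by simp
  also have "\<dots> \<le> card ?V"
    using super_param_subset_verts[OF super_param graph S(1)] finite_verts[OF graph]
    by (intro card_mono)
  also have "\<dots> = card (\<phi> ?V)" using card_eq[OF super_param_verts[OF super_param graph]] by simp
  finally show ?thesis
    using \<open>\<phi> ?V \<subseteq> ?V'\<close> finite_verts[OF graph'] by (intro card_seteq)
qed

lemma card_verts_eq: "card (verts G) = card (verts G')"
  using card_eq[OF super_param_verts[OF super_param graph]] image_verts by simp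

lemma obtain_co_singleton_bij:
  obtains h where "bij_betw h (co_singleton_verts X G) (co_singleton_verts X G')"
    and "\<And>v. v \<in> co_singleton_verts X G \<Longrightarrow> \<phi> (verts G - {v}) = verts G' - {h v}"
proof -
  let ?D = "co_singleton_verts X G" and ?D' = "co_singleton_verts X G'"
  let ?del = "\<lambda>v. verts G - {v}" and ?del' = "\<lambda>w. verts G' - {w}"
  let ?top' = "{T \<in> X G'. card T + 1 = card (verts G')}"
  have "bij_betw \<phi> {S \<in> X G. card S + 1 = card (verts G)} ?top'"
    by (rule bij_betw_Collect[OF bij_X]) (simp add: card_eq card_verts_eq)
  with bij_betw_co_singleton_verts[OF super_param graph]
  have del: "bij_betw (\<phi> \<circ> ?del) ?D ?top'" by (rule bij_betw_trans)
  have del': "bij_betw ?del' ?D' ?top'"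
    by (rule bij_betw_co_singleton_verts[OF super_param graph'])
  have "bij_betw (inv_into ?D' ?del' \<circ> (\<phi> \<circ> ?del)) ?D ?D'"
    using del bij_betw_inv_into[OF del'] by (rule bij_betw_trans)
  moreover have "\<phi> (?del v) = ?del' (inv_into ?D' ?del' (\<phi> (?del v)))" if "v \<in> ?D" for v
  proof -
    have "\<phi> (?del v) \<in> ?del' ` ?D'"
      using bij_betw_apply[OF del that] bij_betw_imp_surj_on[OF del'] by simp
    then show ?thesis by (rule f_inv_into_f[symmetric])
  qed
  ultimately show thesis using that[of "inv_into ?D' ?del' \<circ> (\<phi> \<circ> ?del)"] by simp
qed

lemma obtain_bij_image_eq:
  obtains \<psi> where "bij_betw \<psi> (verts G) (verts G')" "\<And>S. S \<in> X G \<Longrightarrow> \<psi> ` S = \<phi> S"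
proof -
  obtain h where h: "bij_betw h (co_singleton_verts X G) (co_singleton_verts X G')"
    and h_eq: "\<And>v. v \<in> co_singleton_verts X G \<Longrightarrow> \<phi> (verts G - {v}) = verts G' - {h v}"
    using obtain_co_singleton_bij by blast
  have "co_singleton_verts X G \<subseteq> verts G" "co_singleton_verts X G' \<subseteq> verts G'"
    by (auto simp: co_singleton_verts_def)
  then obtain \<psi> where \<psi>: "bij_betw \<psi> (verts G) (verts G')"
    and \<psi>_h: "\<And>v. v \<in> co_singleton_verts X G \<Longrightarrow> \<psi> v = h v"
    using bij_betw_extend[OF finite_verts[OF graph] finite_verts[OF graph'] card_verts_eq _ _ h] by blast
  have "\<psi> ` S = \<phi> S" if S: "S \<in> X G" for S
  proof -
    have S_verts: "S \<subseteq> verts G" using super_param_subset_verts[OF super_param graph S] .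
    have "\<psi> v \<notin> \<phi> S" if v: "v \<in> verts G" "v \<notin> S" for v
    proof -
      have S_sub: "S \<subseteq> verts G - {v}" using v S_verts by blast
      then have "verts G - {v} \<in> X G"
        by (rule super_param_superset[OF super_param graph S]) blast
      with v have "v \<in> co_singleton_verts X G" by (simp add: co_singleton_verts_def)
      moreover have "\<phi> S \<subseteq> \<phi> (verts G - {v})"
        using S S_sub by (rule phi_mono) blast
      ultimately show ?thesis using h_eq \<psi>_h by auto
    qed
    moreover have "\<phi> S \<subseteq> \<psi> ` verts G"
      using super_param_subset_verts[OF super_param graph' bij_betw_apply[OF bij_X S]]
        bij_betw_imp_surj_on[OF \<psi>] by simp
    ultimately have "\<phi> S \<subseteq> \<psi> ` S" by blast
    moreover have "card (\<psi> ` S) = card (\<phi> S)"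
      using card_eq[OF S] inj_on_subset[OF bij_betw_imp_inj_on[OF \<psi>] S_verts] by (simp add: card_image)
    moreover have "finite (\<psi> ` S)" using finite_subset[OF S_verts finite_verts[OF graph]] by simp
    ultimately show ?thesis by (metis card_subset_eq)
  qed
  with \<psi> show thesis by (rule that)
qed

end

theorem theorem2p25:
  fixes X :: "'v graph \<Rightarrow> 'v set set"
    and G G' :: "'v graph"
    and \<phi> :: "'v set \<Rightarrow> 'v set"
  assumes "super_param X"
    and "is_graph G" and "is_graph G'"
    and "card (verts G) = card (verts G')"
    and "graph_iso \<phi> (tar X G) (tar X G')"
  shows "((\<forall>S\<in>X G. card (\<phi> S) = card S) \<longleftrightarrow>
           (\<exists>\<psi>. bij_betw \<psi> (verts G) (verts G') \<and> (\<forall>S\<in>X G. \<psi> ` S = \<phi> S)))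
         \<and> ((\<forall>S\<in>X G. card (\<phi> S) = card S) \<longrightarrow>
           (\<exists>\<psi>. bij_betw \<psi> (verts G) (verts G') \<and>
                 verts (relabel (inv_into (verts G) \<psi>) G') = verts G \<and>
                 X (relabel (inv_into (verts G) \<psi>) G') = X G))"
proof -
  interpret tar_iso X G G' \<phi>
    using assms(1-3,5) by unfold_locales
  have card_preserving_imp_bij:
    "\<exists>\<psi>. bij_betw \<psi> (verts G) (verts G') \<and> (\<forall>S\<in>X G. \<psi> ` S = \<phi> S)"
    if "\<forall>S\<in>X G. card (\<phi> S) = card S"
  proof -
    interpret card_preserving_tar_iso X G G' \<phi>
      using that by unfold_locales blast
    show ?thesis by (rule obtain_bij_image_eq) blast
  qed
  show ?thesis
  proof (intro conjI iffI impI)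
    assume "\<exists>\<psi>. bij_betw \<psi> (verts G) (verts G') \<and> (\<forall>S\<in>X G. \<psi> ` S = \<phi> S)"
    then show "\<forall>S\<in>X G. card (\<phi> S) = card S"
      by (elim exE conjE) (rule card_preserving_if_bij_image_eq)
  next
    assume "\<forall>S\<in>X G. card (\<phi> S) = card S"
    then obtain \<psi> where \<psi>: "bij_betw \<psi> (verts G) (verts G')" "\<forall>S\<in>X G. \<psi> ` S = \<phi> S"
      using card_preserving_imp_bij by blast
    show "\<exists>\<psi>. bij_betw \<psi> (verts G) (verts G') \<and>
        verts (relabel (inv_into (verts G) \<psi>) G') = verts G \<and>
        X (relabel (inv_into (verts G) \<psi>) G') = X G"
      using \<psi> verts_relabel_inv_into[OF \<psi>(1)] X_relabel_inv_into[OF \<psi>(1)] by blast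
  qed (rule card_preserving_imp_bij)
qed

end
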